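(* Let $G$ be a connected graph with vertex set $\{u_1,\dots,u_t\}$, $t\ge2$, and let $\mathcal{H}=\{C_{n_1},\dots,C_{n_t}\}$ be a family of cycles with $n_i\ge7$ for all $i$. Then $\dim_l(G\circ\mathcal{H})=\sum_{i=1}^t\lceil n_i/4\rceil$.
   Context: All graphs are finite and simple. For a connected graph $G$, $\dim_l(G)$ is the minimum size of $S\subseteq V(G)$ such that for every two adjacent vertices $x,y$ some $s\in S$ has $d_G(s,x)\ne d_G(s,y)$ ($d_G$ shortest-path distance). Lexicographic product $G\circ\mathcal{H}$ with $H_i=C_{n_i}$: vertex set $\bigcup_i\{u_i\}\times V(H_i)$, $(u_i,v)\sim(u_j,w)$ iff $u_iu_j\in E(G)$, or $i=j$ and $vw\in E(H_i)$. *)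

theory Defs
  imports Complex_Main
begin

fun reach :: "'a set \<Rightarrow> ('a \<Rightarrow> 'a \<Rightarrow> bool) \<Rightarrow> nat \<Rightarrow> 'a \<Rightarrow> 'a \<Rightarrow> bool" where
  "reach V adj 0 x y = (x = y \<and> x \<in> V)"
| "reach V adj (Suc k) x y = (x \<in> V \<and> (\<exists>z. z \<in> V \<and> adj x z \<and> reach V adj k z y))"

definition connected_graph :: "'a set \<Rightarrow> ('a \<Rightarrow> 'a \<Rightarrow> bool) \<Rightarrow> bool" where
  "connected_graph V adj = (\<forall>x\<in>V. \<forall>y\<in>V. \<exists>k. reach V adj k x y)"

definition gdist :: "'a set \<Rightarrow> ('a \<Rightarrow> 'a \<Rightarrow> bool) \<Rightarrow> 'a \<Rightarrow> 'a \<Rightarrow> nat" where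
  "gdist V adj x y = (LEAST k. reach V adj k x y)"

definition local_resolving :: "'a set \<Rightarrow> ('a \<Rightarrow> 'a \<Rightarrow> bool) \<Rightarrow> 'a set \<Rightarrow> bool" where
  "local_resolving V adj S = (S \<subseteq> V \<and>
     (\<forall>x\<in>V. \<forall>y\<in>V. adj x y \<longrightarrow> (\<exists>s\<in>S. gdist V adj s x \<noteq> gdist V adj s y)))"

definition local_metric_dim :: "'a set \<Rightarrow> ('a \<Rightarrow> 'a \<Rightarrow> bool) \<Rightarrow> nat" where
  "local_metric_dim V adj = (LEAST k. \<exists>S. finite S \<and> card S = k \<and> local_resolving V adj S)"

text \<open>Cycle C_m on vertices {0..<m}.\<close>
definition cyc_adj :: "nat \<Rightarrow> nat \<Rightarrow> nat \<Rightarrow> bool" where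
  "cyc_adj m v w = (w = (v + 1) mod m \<or> v = (w + 1) mod m)"

text \<open>Lexicographic product of G (vertices {0..<t}, adjacency E) with the family of
cycles C_{n i}: vertex (i,v) stands for (u_i, v).\<close>
definition lex_vertices :: "nat \<Rightarrow> (nat \<Rightarrow> nat) \<Rightarrow> (nat \<times> nat) set" where
  "lex_vertices t n = {(i, v). i < t \<and> v < n i}"

definition lex_adj :: "(nat \<Rightarrow> nat \<Rightarrow> bool) \<Rightarrow> (nat \<Rightarrow> nat) \<Rightarrow> nat \<times> nat \<Rightarrow> nat \<times> nat \<Rightarrow> bool" where
  "lex_adj E n p q = (E (fst p) (fst q) \<or> (fst p = fst q \<and> cyc_adj (n (fst p)) (snd p) (snd q)))"

end

theory Submission
  imports Defs
begin

text \<open>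
  The vertices of one fibre {u_i} \<times> C_{n_i} form a module of the product: a vertex outside the
  fibre is adjacent to all or none of them, hence at the same distance from all of them, so only
  landmarks inside the fibre can resolve an edge of the cycle. As u_i has a neighbour in G,
  distances inside the fibre are cycle distances capped at 2, and a landmark at position c resolves
  exactly the four cycle edges {v, v+1} with v \<in> {c-2, c-1, c, c+1}. Hence a fibre needs
  \<lceil>n_i/4\<rceil> landmarks, and the positions 0, 4, 8, ... of every fibre suffice: they cover all cycle
  edges, and an edge between fibres i and j is resolved by (i, 0) or (i, 4), which for n_i \<ge> 7
  have no common neighbour on the cycle.
\<close>

lemma gdist_eqI:
  assumes "reach V adj k x y" and "\<And>j. j < k \<Longrightarrow> \<not> reach V adj j x y"
  shows "gdist V adj x y = k"
  unfolding gdist_def using assms by (intro Least_equality) (auto simp: not_less[symmetric])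

lemma gdist_self: "x \<in> V \<Longrightarrow> gdist V adj x x = 0"
  by (intro gdist_eqI) auto

lemma gdist_adjacent:
  assumes "x \<in> V" "y \<in> V" "adj x y" "x \<noteq> y"
  shows "gdist V adj x y = 1"
  using assms by (intro gdist_eqI) auto

lemma gdist_common_neighbour:
  assumes "x \<in> V" "y \<in> V" "z \<in> V" "adj x z" "adj z y" "x \<noteq> y" "\<not> adj x y"
  shows "gdist V adj x y = 2"
  using assms by (intro gdist_eqI) (auto simp: numeral_2_eq_2 less_Suc_eq)

definition graph_module :: "'a set \<Rightarrow> ('a \<Rightarrow> 'a \<Rightarrow> bool) \<Rightarrow> 'a set \<Rightarrow> bool" where
  "graph_module V adj M \<longleftrightarrow> M \<subseteq> V \<and> (\<forall>z\<in>V - M. \<forall>x\<in>M. \<forall>y\<in>M. adj z x \<longrightarrow> adj z y)"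

lemma reach_module_shortcut:
  assumes "graph_module V adj M" "reach V adj k s x" "s \<notin> M" "x \<in> M" "y \<in> M"
  shows "\<exists>j\<le>k. reach V adj j s y"
  using assms(2,3)
proof (induction k arbitrary: s)
  case 0
  then show ?case using assms(4) by simp
next
  case (Suc k)
  then obtain z where z: "s \<in> V" "z \<in> V" "adj s z" "reach V adj k z x" by auto
  show ?case
  proof (cases "z \<in> M")
    case True
    then have "adj s y" "y \<in> V" using assms(1,5) z Suc.prems(2) unfolding graph_module_def by blast+
    then have "reach V adj 1 s y" using z(1) by simp
    then show ?thesis by fastforce
  next
    case False
    then obtain j where "j \<le> k" "reach V adj j z y" using Suc.IH z(4) by blast
    then show ?thesis using z(1-3) by (intro exI[of _ "Suc j"]) auto
  qed
qed

lemma Least_eq_if_mutually_dominated: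
  fixes P Q :: "nat \<Rightarrow> bool"
  assumes "\<And>k. P k \<Longrightarrow> \<exists>j\<le>k. Q j" and "\<And>k. Q k \<Longrightarrow> \<exists>j\<le>k. P j"
  shows "Least P = Least Q"
proof (cases "\<exists>k. P k")
  case True
  then obtain j where "Q j" using assms(1) by blast
  then have "Least Q \<le> Least P" "Least P \<le> Least Q"
    using assms True by (metis LeastI Least_le le_trans)+
  then show ?thesis by simp
next
  case False
  then have "P = Q" using assms by blast
  then show ?thesis by simp
qed

lemma gdist_module_eq:
  assumes "graph_module V adj M" "s \<notin> M" "x \<in> M" "y \<in> M"
  shows "gdist V adj s x = gdist V adj s y"
  unfolding gdist_def
  using reach_module_shortcut[OF assms(1) _ assms(2)] assms(3,4)
  by (intro Least_eq_if_mutually_dominated) blast+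

lemma local_resolving_subset: "local_resolving V adj S \<Longrightarrow> S \<subseteq> V"
  unfolding local_resolving_def by blast

lemma local_resolvingD:
  assumes "local_resolving V adj S" "x \<in> V" "y \<in> V" "adj x y"
  obtains s where "s \<in> S" "gdist V adj s x \<noteq> gdist V adj s y"
  using assms unfolding local_resolving_def by blast

lemma local_metric_dim_eqI:
  assumes "finite S" "local_resolving V adj S"
    and "\<And>S'. finite S' \<Longrightarrow> local_resolving V adj S' \<Longrightarrow> card S \<le> card S'"
  shows "local_metric_dim V adj = card S"
  unfolding local_metric_dim_def using assms by (intro Least_equality) blast+

lemma mod_add_right_cancel_nat: "(a + k) mod m = (b + k) mod m \<longleftrightarrow> a mod (m::nat) = b mod m"
  by (simp add: mod_eq_iff_dvd_symdiff_nat)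

lemma cyc_adj_rotate:
  assumes "a < m" "b < m"
  shows "cyc_adj m ((a + k) mod m) ((b + k) mod m) \<longleftrightarrow> cyc_adj m a b"
proof -
  have succ: "(y + k) mod m = Suc ((x + k) mod m) mod m \<longleftrightarrow> y = Suc x mod m" if "y < m" for x y
    using mod_add_right_cancel_nat[of y k m "Suc x"] that by (simp add: mod_Suc_eq)
  show ?thesis unfolding cyc_adj_def using succ assms by simp
qed

definition capped_cycle_dist :: "nat \<Rightarrow> nat \<Rightarrow> nat \<Rightarrow> nat" where
  "capped_cycle_dist m c v = (if v = c then 0 else if cyc_adj m c v then 1 else 2)"

text \<open>The window {c-2, c-1, c, c+1} of the cycle C_m.\<close>
definition cycle_window :: "nat \<Rightarrow> nat \<Rightarrow> nat set" where
  "cycle_window m c = (\<lambda>u. (u + c) mod m) ` {0, 1, m - 2, m - 1}"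

lemma inj_on_rotate: "inj_on (\<lambda>u. (u + c) mod m) {..<m::nat}"
  unfolding inj_on_def mod_add_right_cancel_nat by simp

lemma capped_cycle_dist_rotate:
  assumes "a < m" "b < m"
  shows "capped_cycle_dist m ((a + k) mod m) ((b + k) mod m) = capped_cycle_dist m a b"
  using assms mod_add_right_cancel_nat[of b k m a]
  by (simp add: capped_cycle_dist_def cyc_adj_rotate)

lemma capped_cycle_dist_0_eq:
  assumes "3 \<le> m" "v < m"
  shows "capped_cycle_dist m 0 v = (if v = 0 then 0 else if v = 1 \<or> v = m - 1 then 1 else 2)"
  using assms by (auto simp: capped_cycle_dist_def cyc_adj_def mod_Suc)

lemma capped_cycle_dist_0_step_differs_iff:
  assumes "4 \<le> m" "v < m"
  shows "capped_cycle_dist m 0 v \<noteq> capped_cycle_dist m 0 (Suc v mod m) \<longleftrightarrow> v \<in> {0, 1, m - 2, m - 1}"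
  using assms by (auto simp: capped_cycle_dist_0_eq mod_Suc)

lemma capped_cycle_dist_step_differs_iff:
  assumes "4 \<le> m" "c < m" "v < m"
  shows "capped_cycle_dist m c v \<noteq> capped_cycle_dist m c (Suc v mod m) \<longleftrightarrow> v \<in> cycle_window m c"
proof -
  \<comment> \<open>Rotating the cycle by -c reduces the claim to c = 0.\<close>
  define u where "u = (v + m - c) mod m"
  have u: "u < m" using assms unfolding u_def by simp
  have v: "v = (u + c) mod m" using assms unfolding u_def by (simp add: mod_add_left_eq)
  have c: "c = (0 + c) mod m" using assms by simp
  have sv: "Suc v mod m = (Suc u mod m + c) mod m" unfolding v by (simp add: mod_Suc_eq mod_add_left_eq)
  have "capped_cycle_dist m c v \<noteq> capped_cycle_dist m c (Suc v mod m) \<longleftrightarrow>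
        capped_cycle_dist m 0 u \<noteq> capped_cycle_dist m 0 (Suc u mod m)"
    using capped_cycle_dist_rotate[of 0 m u c] capped_cycle_dist_rotate[of 0 m "Suc u mod m" c] u assms
    by (simp flip: v c sv)
  also have "\<dots> \<longleftrightarrow> u \<in> {0, 1, m - 2, m - 1}" using assms(1) u by (rule capped_cycle_dist_0_step_differs_iff)
  also have "\<dots> \<longleftrightarrow> v \<in> cycle_window m c"
    unfolding v cycle_window_def using u assms(1)
    by (intro inj_on_image_mem_iff[symmetric, OF inj_on_rotate]) auto
  finally show ?thesis .
qed

lemma card_cycle_window: "card (cycle_window m c) \<le> 4"
proof -
  have "card {0, 1, m - 2, m - 1 :: nat} \<le> 4" by (auto simp: card_insert_if)
  then show ?thesis unfolding cycle_window_def by (meson card_image_le finite.intros le_trans)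
qed

lemma cycle_windows_at_multiples_of_4_cover:
  assumes "2 \<le> m" "v < m"
  shows "\<exists>c<m. 4 dvd c \<and> v \<in> cycle_window m c"
proof -
  define s where "s = 4 * ((v + 2) div 4)"
  have s: "s \<le> v + 2" "v + 2 < s + 4" "4 dvd s" unfolding s_def by auto
  have in_window: "v \<in> cycle_window m c" if "u \<in> {0, 1, m - 2, m - 1}" "v = (u + c) mod m" for u c
    using that unfolding cycle_window_def by blast
  show ?thesis
  proof (cases "s < m")
    case True
    consider "v + 2 = s" | "v + 1 = s" | "v = s" | "v = s + 1" using s(1,2) by linarith
    then have "v = (m - 2 + s) mod m \<or> v = (m - 1 + s) mod m \<or> v = (0 + s) mod m \<or> v = (1 + s) mod m"
    proof cases
      case 1
      then have "m - 2 + s = v + m" using assms by linarith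
      then show ?thesis using assms by simp
    next
      case 2
      then have "m - 1 + s = v + m" using assms by linarith
      then show ?thesis using assms by simp
    qed (use assms in auto)
    then have "v \<in> cycle_window m s" using in_window by blast
    then show ?thesis using True s(3) by blast
  next
    case False
    then have "v = m - 2 \<or> v = m - 1" using s(1) assms(2) by linarith
    then have "v = (m - 2 + 0) mod m \<or> v = (m - 1 + 0) mod m" using assms by auto
    then have "v \<in> cycle_window m 0" using in_window by blast
    then show ?thesis using assms by (intro exI[of _ 0]) simp
  qed
qed

lemma capped_cycle_dist_0_4_not_both_1:
  assumes "7 \<le> m" "v < m"
  shows "capped_cycle_dist m 0 v \<noteq> 1 \<or> capped_cycle_dist m 4 v \<noteq> 1"
  using assms by (auto simp: capped_cycle_dist_def cyc_adj_def mod_Suc)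

lemma lex_vertices_iff [simp]: "(i, v) \<in> lex_vertices t n \<longleftrightarrow> i < t \<and> v < n i"
  by (simp add: lex_vertices_def)

lemma lex_adj_iff [simp]: "lex_adj E n (i, v) (j, w) \<longleftrightarrow> E i j \<or> (i = j \<and> cyc_adj (n i) v w)"
  by (simp add: lex_adj_def)

lemma finite_lex_vertices: "finite (lex_vertices t n)"
  by (rule finite_subset[of _ "SIGMA i:{..<t}. {..<n i}"]) (auto simp: lex_vertices_def)

lemma finite_lex_fibre_of_subset:
  assumes "S \<subseteq> lex_vertices t n"
  shows "finite {v. (i, v) \<in> S}"
proof (rule finite_subset)
  show "{v. (i, v) \<in> S} \<subseteq> {..<n i}" using assms by auto
qed simp

lemma card_subset_lex_vertices:
  assumes "S \<subseteq> lex_vertices t n"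
  shows "card S = (\<Sum>i<t. card {v. (i, v) \<in> S})"
proof -
  have "S = (SIGMA i:{..<t}. {v. (i, v) \<in> S})"
  proof (intro subset_antisym subsetI)
    fix p assume "p \<in> S"
    then show "p \<in> (SIGMA i:{..<t}. {v. (i, v) \<in> S})" using assms by (cases p) auto
  qed auto
  then have "card S = card (SIGMA i:{..<t}. {v. (i, v) \<in> S})" by (rule arg_cong)
  also have "\<dots> = (\<Sum>i<t. card {v. (i, v) \<in> S})"
    using finite_lex_fibre_of_subset[OF assms] by simp
  finally show ?thesis .
qed

lemma graph_module_lex_fibre:
  "graph_module (lex_vertices t n) (lex_adj E n) {p \<in> lex_vertices t n. fst p = i}"
  unfolding graph_module_def lex_adj_def by auto

locale lex_cycle_product =
  fixes t :: nat and E :: "nat \<Rightarrow> nat \<Rightarrow> bool" and n :: "nat \<Rightarrow> nat"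
  assumes two_le_t: "t \<ge> 2"
    and E_bounded: "\<forall>i j. E i j \<longrightarrow> i < t \<and> j < t"
    and E_sym: "\<forall>i j. E i j \<longrightarrow> E j i"
    and E_irrefl: "\<forall>i. \<not> E i i"
    and E_connected: "connected_graph {0..<t} E"
    and cycle_length: "\<forall>i<t. n i \<ge> 7"
begin

abbreviation "V \<equiv> lex_vertices t n"
abbreviation "adj \<equiv> lex_adj E n"

lemma exists_neighbour:
  assumes "i < t"
  obtains k where "E i k"
proof -
  define j :: nat where "j = (if i = 0 then 1 else 0)"
  have j: "j < t" "j \<noteq> i" using two_le_t assms unfolding j_def by auto
  then obtain m where "reach {0..<t} E m i j"
    using E_connected assms unfolding connected_graph_def by (meson atLeastLessThan_iff zero_le)
  with j(2) that show ?thesis by (cases m) auto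
qed

lemma gdist_same_fibre:
  assumes "i < t" "c < n i" "v < n i"
  shows "gdist V adj (i, c) (i, v) = capped_cycle_dist (n i) c v"
proof -
  consider "v = c" | "v \<noteq> c" "cyc_adj (n i) c v" | "v \<noteq> c" "\<not> cyc_adj (n i) c v" by blast
  then show ?thesis
  proof cases
    case 1
    then show ?thesis using assms by (simp add: gdist_self capped_cycle_dist_def)
  next
    case 2
    then show ?thesis using assms by (simp add: gdist_adjacent capped_cycle_dist_def)
  next
    case 3
    obtain k where k: "E i k" using exists_neighbour assms(1) by blast
    then have "(k, 0) \<in> V" "E k i" using E_bounded E_sym cycle_length by fastforce+
    with 3 k show ?thesis using assms E_irrefl
      by (simp add: gdist_common_neighbour[of _ _ _ "(k, 0)"] capped_cycle_dist_def)
  qed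
qed

lemma gdist_other_fibre:
  assumes "fst s \<noteq> i" "i < t" "v < n i" "v' < n i"
  shows "gdist V adj s (i, v) = gdist V adj s (i, v')"
  using assms by (intro gdist_module_eq[OF graph_module_lex_fibre]) auto

definition multiples_of_4 :: "(nat \<times> nat) set" where
  "multiples_of_4 = {p \<in> V. 4 dvd snd p}"

lemma card_multiples_of_4: "card multiples_of_4 = (\<Sum>i<t. (n i + 3) div 4)"
proof -
  have "card {v. (i, v) \<in> multiples_of_4} = (n i + 3) div 4" if "i < t" for i
  proof -
    have "{v. (i, v) \<in> multiples_of_4} = (\<lambda>j. 4 * j) ` {..<(n i + 3) div 4}"
      using that unfolding multiples_of_4_def by (auto elim!: dvdE simp: image_iff)
    then show ?thesis by (simp add: card_image inj_on_def)
  qed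
  then show ?thesis using card_subset_lex_vertices[of multiples_of_4 t n]
    unfolding multiples_of_4_def by simp
qed

lemma cycle_edge_resolved_by_multiples_of_4:
  assumes "i < t" "v < n i"
  shows "\<exists>s\<in>multiples_of_4. gdist V adj s (i, v) \<noteq> gdist V adj s (i, Suc v mod n i)"
proof -
  have m: "7 \<le> n i" using cycle_length assms(1) by blast
  then obtain c where c: "c < n i" "4 dvd c" "v \<in> cycle_window (n i) c"
    using cycle_windows_at_multiples_of_4_cover[of "n i" v] assms(2) by auto
  then have "capped_cycle_dist (n i) c v \<noteq> capped_cycle_dist (n i) c (Suc v mod n i)"
    using capped_cycle_dist_step_differs_iff m assms(2) by simp
  moreover have "(i, c) \<in> multiples_of_4" using assms c unfolding multiples_of_4_def by simp
  moreover have "Suc v mod n i < n i" using m by simp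
  ultimately show ?thesis using gdist_same_fibre[OF assms(1) c(1)] assms(2) by metis
qed

lemma cross_edge_resolved_by_multiples_of_4:
  assumes "E i j" "v < n i" "w < n j"
  shows "\<exists>s\<in>multiples_of_4. gdist V adj s (i, v) \<noteq> gdist V adj s (j, w)"
proof -
  have ij: "i < t" "j < t" "i \<noteq> j" using assms(1) E_bounded E_irrefl by blast+
  have m: "7 \<le> n i" using cycle_length ij(1) by blast
  obtain c where c: "c \<in> {0, 4}" "capped_cycle_dist (n i) c v \<noteq> 1"
    using capped_cycle_dist_0_4_not_both_1[OF m assms(2)] by blast
  then have "c < n i" "(i, c) \<in> multiples_of_4" using m ij unfolding multiples_of_4_def by auto
  moreover have "gdist V adj (i, c) (j, w) = 1"
    using \<open>c < n i\<close> assms ij by (intro gdist_adjacent) auto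
  ultimately have "gdist V adj (i, c) (i, v) \<noteq> gdist V adj (i, c) (j, w)"
    using c(2) gdist_same_fibre[OF ij(1) _ assms(2)] by simp
  then show ?thesis using \<open>(i, c) \<in> multiples_of_4\<close> by blast
qed

lemma multiples_of_4_resolving: "local_resolving V adj multiples_of_4"
  unfolding local_resolving_def
proof (intro conjI ballI impI)
  show "multiples_of_4 \<subseteq> V" unfolding multiples_of_4_def by blast
next
  fix x y assume "x \<in> V" "y \<in> V" "adj x y"
  then obtain i v j w where xy: "x = (i, v)" "y = (j, w)" "i < t" "v < n i" "j < t" "w < n j"
    and "E i j \<or> (i = j \<and> (w = Suc v mod n i \<or> v = Suc w mod n i))"
    by (cases x, cases y) (auto simp: cyc_adj_def)
  then consider "E i j" | "i = j" "w = Suc v mod n i" | "i = j" "v = Suc w mod n i" by blast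
  then show "\<exists>s\<in>multiples_of_4. gdist V adj s x \<noteq> gdist V adj s y"
  proof cases
    case 1
    then show ?thesis using cross_edge_resolved_by_multiples_of_4 xy by blast
  next
    case 2
    then show ?thesis using cycle_edge_resolved_by_multiples_of_4 xy by blast
  next
    case 3
    then obtain s where "s \<in> multiples_of_4" "gdist V adj s y \<noteq> gdist V adj s x"
      using cycle_edge_resolved_by_multiples_of_4[of j w] xy by auto
    then show ?thesis by (intro bexI[of _ s]) simp_all
  qed
qed

lemma card_fibre_of_resolving_set:
  assumes "local_resolving V adj S" "i < t"
  shows "(n i + 3) div 4 \<le> card {c. (i, c) \<in> S}"
proof -
  let ?S = "{c. (i, c) \<in> S}"
  have m: "7 \<le> n i" using cycle_length assms(2) by blast
  have SV: "S \<subseteq> V" using assms(1) by (rule local_resolving_subset)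
  then have fin: "finite ?S" by (rule finite_lex_fibre_of_subset)
  have cover: "{..<n i} \<subseteq> (\<Union>c\<in>?S. cycle_window (n i) c)"
  proof
    fix v assume "v \<in> {..<n i}"
    then have v: "v < n i" "Suc v mod n i < n i" using m by auto
    then have "(i, v) \<in> V" "(i, Suc v mod n i) \<in> V" "adj (i, v) (i, Suc v mod n i)"
      using assms(2) by (simp_all add: cyc_adj_def)
    then obtain s where s: "s \<in> S" "gdist V adj s (i, v) \<noteq> gdist V adj s (i, Suc v mod n i)"
      by (rule local_resolvingD[OF assms(1)])
    have "fst s = i"
    proof (rule ccontr)
      assume "fst s \<noteq> i"
      then show False using gdist_other_fibre[OF _ assms(2) v] s(2) by simp
    qed
    then obtain c where "s = (i, c)" by (cases s) simp
    then have c: "c \<in> ?S" "c < n i" using s(1) subsetD[OF SV, of "(i, c)"] by simp_all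
    then have "capped_cycle_dist (n i) c v \<noteq> capped_cycle_dist (n i) c (Suc v mod n i)"
      using \<open>s = (i, c)\<close> s(2) gdist_same_fibre[OF assms(2)] v by simp
    then have "v \<in> cycle_window (n i) c"
      using capped_cycle_dist_step_differs_iff[of "n i" c v] m c(2) v(1) by simp
    then show "v \<in> (\<Union>c\<in>?S. cycle_window (n i) c)" using c(1) by blast
  qed
  have "finite (\<Union>c\<in>?S. cycle_window (n i) c)" using fin by (simp add: cycle_window_def)
  then have "card {..<n i} \<le> card (\<Union>c\<in>?S. cycle_window (n i) c)"
    using cover by (rule card_mono)
  also have "\<dots> \<le> (\<Sum>c\<in>?S. card (cycle_window (n i) c))" by (rule card_UN_le[OF fin])
  also have "\<dots> \<le> (\<Sum>c\<in>?S. 4)" by (intro sum_mono card_cycle_window)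
  finally show ?thesis by simp
qed

theorem local_metric_dim_lex_cycles: "local_metric_dim V adj = (\<Sum>i<t. (n i + 3) div 4)"
proof -
  have minimal: "card multiples_of_4 \<le> card S" if "local_resolving V adj S" for S
  proof -
    have "card multiples_of_4 \<le> (\<Sum>i<t. card {c. (i, c) \<in> S})"
      unfolding card_multiples_of_4 using card_fibre_of_resolving_set that by (intro sum_mono) simp
    also have "\<dots> = card S"
      using card_subset_lex_vertices[OF local_resolving_subset[OF that]] by simp
    finally show ?thesis .
  qed
  have "finite multiples_of_4"
    unfolding multiples_of_4_def using finite_lex_vertices by simp
  then have "local_metric_dim V adj = card multiples_of_4"
    using multiples_of_4_resolving minimal by (rule local_metric_dim_eqI)
  then show ?thesis by (simp only: card_multiples_of_4)
qed

end

lemma nat_ceiling_real_divide: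
  assumes "0 < k"
  shows "nat \<lceil>real m / real k\<rceil> = (m + k - 1) div k"
proof -
  define q where "q = (m + k - 1) div k"
  have "k * q + (m + k - 1) mod k = m + k - 1" "(m + k - 1) mod k < k"
    using assms unfolding q_def by (simp_all only: mult_div_mod_eq mod_less_divisor)
  then have "k * q < m + k" "m \<le> k * q" by linarith+
  then have "real k * real q < real m + real k" "real m \<le> real k * real q"
    by (simp_all flip: of_nat_mult of_nat_add)
  then have "\<lceil>real m / real k\<rceil> = int q"
    using assms by (intro ceiling_unique) (simp_all add: field_simps)
  then show ?thesis unfolding q_def by simp
qed

theorem proposition3:
  fixes t :: nat and E :: "nat \<Rightarrow> nat \<Rightarrow> bool" and n :: "nat \<Rightarrow> nat"
  assumes "t \<ge> 2"
    and "\<forall>i j. E i j \<longrightarrow> i < t \<and> j < t"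
    and "\<forall>i j. E i j \<longrightarrow> E j i"
    and "\<forall>i. \<not> E i i"
    and "connected_graph {0..<t} E"
    and "\<forall>i<t. n i \<ge> 7"
  shows "local_metric_dim (lex_vertices t n) (lex_adj E n) = (\<Sum>i<t. nat \<lceil>real (n i) / 4\<rceil>)"
proof -
  interpret lex_cycle_product t E n using assms by unfold_locales
  have "nat \<lceil>real m / 4\<rceil> = (m + 3) div 4" for m
    using nat_ceiling_real_divide[of 4 m] by simp
  then show ?thesis using local_metric_dim_lex_cycles by simp
qed

end
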